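(* Let $P(a,b)=\dfrac{a(1-b)}{a(1-b)+b(1-a)}$ (the James function) and let $0<c<1$. Then the level curve $\{(a,b)\in(0,1)^2 : P(a,b)=c\}$ is the graph of the unique solution $b=b(a)$, $0<a<1$, of the differential equation \[ \frac{db}{da}=\frac{b(1-b)}{a(1-a)} \] that passes through the point $(c,\tfrac12)$. *)

theory Defs
  imports Complex_Main
begin

definition james :: "real \<Rightarrow> real \<Rightarrow> real" where
  "james a b = a * (1 - b) / (a * (1 - b) + b * (1 - a))"

end

theory Submission
  imports Defs
begin

text \<open>
  For fixed \<open>a\<close> the map \<open>b \<mapsto> james a b\<close> is an involution of \<open>(0,1)\<close>, so the
  level curve \<open>james a b = c\<close> is the graph of \<open>a \<mapsto> james a c\<close>. Differentiating
  this explicit function shows that it solves the ODE, and it passes through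
  \<open>(c, 1/2)\<close>. Uniqueness holds because the right-hand side is locally Lipschitz
  in \<open>b\<close>: the difference \<open>d\<close> of two solutions satisfies a linear equation
  \<open>d' = d h\<close> with \<open>h\<close> continuous, and then \<open>d(t)\<^sup>2 exp(-2Mt)\<close> is nonincreasing
  for an upper bound \<open>M\<close> of \<open>h\<close>, so \<open>d\<close> vanishes to the right of any of its zeros
  (and, reversing time, also to the left).
\<close>

lemma linear_ode_zero_forward:
  fixes d h :: "real \<Rightarrow> real"
  assumes "c \<le> a"
    and der: "\<And>t. t \<in> {c..a} \<Longrightarrow> (d has_real_derivative d t * h t) (at t)"
    and cont: "continuous_on {c..a} h"
    and "d c = 0"
  shows "d a = 0"
proof -
  obtain M where bound: "\<forall>t\<in>{c..a}. h t \<le> M"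
    using continuous_attains_sup[OF compact_Icc _ cont] \<open>c \<le> a\<close> by auto
  define g where "g t = (d t)\<^sup>2 * exp (- 2 * M * t)" for t
  have "g a \<le> g c"
  proof (rule DERIV_nonpos_imp_nonincreasing[OF \<open>c \<le> a\<close>])
    fix t assume "c \<le> t" "t \<le> a"
    then have t: "t \<in> {c..a}" by simp
    have "(g has_real_derivative
        2 * d t * (d t * h t) * exp (- 2 * M * t) + (d t)\<^sup>2 * (exp (- 2 * M * t) * (- 2 * M))) (at t)"
      unfolding g_def by (rule derivative_eq_intros der[OF t] refl | simp)+
    moreover have "2 * d t * (d t * h t) * exp (- 2 * M * t) + (d t)\<^sup>2 * (exp (- 2 * M * t) * (- 2 * M))
        = 2 * (d t)\<^sup>2 * exp (- 2 * M * t) * (h t - M)"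
      by (simp add: algebra_simps power2_eq_square)
    moreover have "2 * (d t)\<^sup>2 * exp (- 2 * M * t) * (h t - M) \<le> 0"
      using bound t by (intro mult_nonneg_nonpos) auto
    ultimately show "\<exists>y. DERIV g t :> y \<and> y \<le> 0" by auto
  qed
  then have "(d a)\<^sup>2 * exp (- 2 * M * a) \<le> 0"
    using \<open>d c = 0\<close> by (simp add: g_def)
  then show ?thesis
    by (simp add: mult_le_0_iff)
qed

lemma linear_ode_zero:
  fixes d h :: "real \<Rightarrow> real"
  assumes der: "\<And>t. t \<in> {min c a..max c a} \<Longrightarrow> (d has_real_derivative d t * h t) (at t)"
    and cont: "continuous_on {min c a..max c a} h"
    and "d c = 0"
  shows "d a = 0"
proof (cases "c \<le> a")
  case True
  then have "{min c a..max c a} = {c..a}" by simp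
  from linear_ode_zero_forward[OF True der[unfolded this] cont[unfolded this] \<open>d c = 0\<close>]
  show ?thesis .
next
  case False
  then have I: "{min c a..max c a} = {a..c}" by simp
  have "(\<lambda>t. d (- t)) (- a) = 0"
  proof (rule linear_ode_zero_forward[where d = "\<lambda>t. d (- t)" and h = "\<lambda>t. - h (- t)"])
    fix t :: real assume "t \<in> {- c..- a}"
    then have "- t \<in> {a..c}" by auto
    from DERIV_chain2[OF der[unfolded I, OF this] DERIV_minus[OF DERIV_ident]]
    show "((\<lambda>t. d (- t)) has_real_derivative d (- t) * - h (- t)) (at t)"
      by simp
  next
    have "uminus ` {- c..- a} \<subseteq> {a..c :: real}" by auto
    then have "continuous_on {- c..- a} (h \<circ> uminus)"
      by (intro continuous_on_compose continuous_intros continuous_on_subset[OF cont[unfolded I]])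
    then show "continuous_on {- c..- a} (\<lambda>t. - h (- t))"
      by (intro continuous_intros) (simp add: o_def)
  next
    show "- c \<le> - a" using False by simp
  qed (simp add: \<open>d c = 0\<close>)
  then show ?thesis by simp
qed

definition solves_james_ode :: "(real \<Rightarrow> real) \<Rightarrow> bool" where
  "solves_james_ode b \<longleftrightarrow>
     (\<forall>a\<in>{0<..<1}. (b has_real_derivative b a * (1 - b a) / (a * (1 - a))) (at a))"

lemma james_ode_solution_unique:
  assumes "solves_james_ode b\<^sub>1" "solves_james_ode b\<^sub>2"
    and "c \<in> {0<..<1}" "b\<^sub>1 c = b\<^sub>2 c" "a \<in> {0<..<1}"
  shows "b\<^sub>1 a = b\<^sub>2 a"
proof -
  define h where "h t = (1 - b\<^sub>1 t - b\<^sub>2 t) / (t * (1 - t))" for t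
  have I: "{min c a..max c a} \<subseteq> {0<..<1}"
    using assms(3,5) by auto
  have "continuous_on {0<..<1} b\<^sub>1" "continuous_on {0<..<1} b\<^sub>2"
    using assms(1,2) unfolding solves_james_ode_def
    by (auto intro!: DERIV_continuous_on intro: has_field_derivative_at_within)
  then have "continuous_on {0<..<1} h"
    unfolding h_def by (intro continuous_intros) auto
  have "(b\<^sub>1 - b\<^sub>2) a = 0"
  proof (rule linear_ode_zero[where d = "b\<^sub>1 - b\<^sub>2" and h = h])
    fix t assume "t \<in> {min c a..max c a}"
    then have t: "t \<in> {0<..<1}" using I by blast
    then have "((b\<^sub>1 - b\<^sub>2) has_real_derivative
        b\<^sub>1 t * (1 - b\<^sub>1 t) / (t * (1 - t)) - b\<^sub>2 t * (1 - b\<^sub>2 t) / (t * (1 - t))) (at t)"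
      using assms(1,2) unfolding solves_james_ode_def fun_diff_def
      by (intro derivative_intros) auto
    moreover have "b\<^sub>1 t * (1 - b\<^sub>1 t) / (t * (1 - t)) - b\<^sub>2 t * (1 - b\<^sub>2 t) / (t * (1 - t))
        = (b\<^sub>1 - b\<^sub>2) t * h t"
      unfolding h_def by (simp add: diff_divide_distrib[symmetric] algebra_simps)
    ultimately show "((b\<^sub>1 - b\<^sub>2) has_real_derivative (b\<^sub>1 - b\<^sub>2) t * h t) (at t)"
      by simp
  qed (use continuous_on_subset[OF \<open>continuous_on {0<..<1} h\<close> I] assms(4) in auto)
  then show ?thesis by simp
qed

lemma james_denom_pos:
  fixes a b :: real
  assumes "a \<in> {0<..<1}" "b \<in> {0<..<1}"
  shows "a * (1 - b) + b * (1 - a) > 0"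
  using assms by (auto intro!: add_pos_pos)

lemma james_in_unit_interval:
  assumes "a \<in> {0<..<1}" "b \<in> {0<..<1}"
  shows "james a b \<in> {0<..<1}"
  using assms james_denom_pos[OF assms] unfolding james_def
  by (auto simp: field_simps)

lemma james_eq_iff:
  assumes "a \<in> {0<..<1}" "b \<in> {0<..<1}" "c \<in> {0<..<1}"
  shows "james a b = c \<longleftrightarrow> b = james a c"
  using james_denom_pos[OF assms(1,2)] james_denom_pos[OF assms(1,3)]
  unfolding james_def by (auto simp: field_simps)

lemma james_self: "c \<in> {0<..<1} \<Longrightarrow> james c c = 1/2"
  unfolding james_def by (simp add: field_simps)

lemma solves_james_ode_james:
  assumes "c \<in> {0<..<1}"
  shows "solves_james_ode (\<lambda>a. james a c)"
  unfolding solves_james_ode_def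
proof
  fix a :: real assume a: "a \<in> {0<..<1}"
  define D where "D = a * (1 - c) + c * (1 - a)"
  have "D > 0"
    unfolding D_def using james_denom_pos[OF a assms] by (simp add: algebra_simps)
  have "((\<lambda>a. james a c) has_real_derivative
      ((1 - c) * D - a * (1 - c) * ((1 - c) - c)) / D\<^sup>2) (at a)"
    unfolding james_def
    by (rule derivative_eq_intros refl | simp)+ (use \<open>D > 0\<close> in \<open>simp_all add: D_def power2_eq_square\<close>)
  moreover have "((1 - c) * D - a * (1 - c) * ((1 - c) - c)) / D\<^sup>2
      = james a c * (1 - james a c) / (a * (1 - a))"
    using \<open>D > 0\<close> a unfolding james_def D_def[symmetric]
    by (simp add: field_simps power2_eq_square) (simp add: D_def algebra_simps)
  ultimately show "((\<lambda>a. james a c) has_real_derivative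
      james a c * (1 - james a c) / (a * (1 - a))) (at a)"
    by simp
qed

theorem proposition3p3:
  fixes c :: real
  assumes "0 < c" "c < 1"
  shows "\<exists>b :: real \<Rightarrow> real.
     (\<forall>a\<in>{0<..<1}. (b has_real_derivative (b a * (1 - b a) / (a * (1 - a)))) (at a))
   \<and> b c = 1/2
   \<and> (\<forall>b' :: real \<Rightarrow> real.
         (\<forall>a\<in>{0<..<1}. (b' has_real_derivative (b' a * (1 - b' a) / (a * (1 - a)))) (at a))
         \<and> b' c = 1/2 \<longrightarrow> (\<forall>a\<in>{0<..<1}. b' a = b a))
   \<and> {(a, y). a \<in> {0<..<1} \<and> y \<in> {0<..<1} \<and> james a y = c} = {(a, b a) | a. a \<in> {0<..<1}}"
proof -
  have c: "c \<in> {0<..<1}" using assms by simp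
  define b where "b a = james a c" for a
  have ode: "solves_james_ode b"
    using solves_james_ode_james[OF c] by (simp add: b_def [abs_def])
  have init: "b c = 1/2"
    using james_self[OF c] by (simp add: b_def)
  have unique: "b' a = b a" if "solves_james_ode b'" "b' c = 1/2" "a \<in> {0<..<1}" for b' a
    using james_ode_solution_unique[OF that(1) ode c] that(2,3) init by simp
  have level: "{(a, y). a \<in> {0<..<1} \<and> y \<in> {0<..<1} \<and> james a y = c} = {(a, b a) | a. a \<in> {0<..<1}}"
    using james_eq_iff[OF _ _ c] james_in_unit_interval[OF _ c] unfolding b_def by fastforce
  show ?thesis
    using ode init unique level unfolding solves_james_ode_def by blast
qed

end
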